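(* On $\Omega=\mathbb R$ with $N=3$ phases, let $\delta_1=\frac1{64}$, $\delta_2=\frac5{16}$ and define the nonnegative kernels $K_{1,2}=K_{2,1}=\mathbf 1_{[-1,1]}$ and $K_{1,3}=K_{3,1}=K_{2,3}=K_{3,2}=\delta_1(\mathbf 1_{[-11,-9]}+\mathbf 1_{[9,11]})+\delta_2\mathbf 1_{[-1,1]}$. Let $\sigma_{i,j}=\frac12\int_{\mathbb R}|x|K_{i,j}(x)\,dx$ and $\mu_{i,j}=\frac{1}{2K_{i,j}(0)}$ for $i\ne j$ (so $\sigma_{1,2}=\frac12$, $\sigma_{1,3}=\sigma_{2,3}=20\delta_1+\frac{\delta_2}2$, $\mu_{1,2}=\frac12$, $\mu_{1,3}=\mu_{2,3}=\frac1{2\delta_2}$), with $\sigma_{i,i}=\mu_{i,i}^{-1}=0$. Then: (i) $\sigma$ satisfies the triangle inequality $\sigma_{i,j}+\sigma_{j,k}\ge\sigma_{i,k}$ for all $i,j,k$; (ii) both $\sigma$ and the matrix $(\mu_{i,j}^{-1})$ are conditionally negative semi-definite; (iii) for $\epsilon>0$ let $u_{1,\epsilon}=\mathbf 1_{[\epsilon,\infty)}$, $u_{2,\epsilon}=\mathbf 1_{(-\infty,-\epsilon]}$, $u_{3,\epsilon}=\mathbf 1_{[-\epsilon,\epsilon]}$; then for every $\epsilon>0$, \[ E_\epsilon(\boldsymbol u_\epsilon,\boldsymbol K):=\frac1\epsilon\sum_{(i,j)\in\mathcal I_3}\int_{\mathbb R}u_{j,\epsilon}\,(K_{i,j})_\epsilon*u_{i,\epsilon}\,dx=16\delta_1+2\delta_2=\tfrac78,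 \] while $\boldsymbol u_\epsilon\to\boldsymbol u_0=(\mathbf 1_{[0,\infty)},\mathbf 1_{(-\infty,0]},0)$ in $L^1(\mathbb R)$ and the sharp-interface energy of the limit is $E(\boldsymbol u_0,\sigma)=\sum_{(i,j)\in\mathcal I_3}\sigma_{i,j}\mathcal H^0(\partial\Sigma_i\cap\partial\Sigma_j)=2\sigma_{1,2}=1$. Consequently $\liminf_{\epsilon\to0}E_\epsilon(\boldsymbol u_\epsilon,\boldsymbol K)<E(\boldsymbol u_0,\sigma)$, so the nonlocal multiphase energies do not $\Gamma$-converge to $E(\cdot,\sigma)$. Moreover, the reciprocal mobilities do not satisfy the triangle inequality ($\mu_{1,2}^{-1}>\mu_{1,3}^{-1}+\mu_{3,2}^{-1}$).
   Context: $\mathcal I_3=\{(i,j)\in\{1,2,3\}^2:i\ne j\}$; $K_\epsilon(x)=\epsilon^{-1}K(x/\epsilon)$. A symmetric matrix $A$ is conditionally negative semi-definite if $\sum_{i,j}A_{i,j}\xi_i\xi_j\le0$ whenever $\sum_i\xi_i=0$. For $\boldsymbol u_0$, $\Sigma_1=[0,\infty)$, $\Sigma_2=(-\infty,0]$, $\Sigma_3=\emptyset$. *)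

theory Defs
  imports "HOL-Analysis.Analysis"
begin

definition phases :: "nat set" where
  "phases = {1, 2, 3}"

definition I3 :: "(nat \<times> nat) set" where
  "I3 = {(i, j). i \<in> phases \<and> j \<in> phases \<and> i \<noteq> j}"

definition delta1 :: real where "delta1 = 1 / 64"
definition delta2 :: real where "delta2 = 5 / 16"

definition Kern :: "nat \<Rightarrow> nat \<Rightarrow> real \<Rightarrow> real" where
  "Kern i j x =
     (if {i, j} = {1, 2} then indicator {-1..1} x
      else if {i, j} = {1, 3} \<or> {i, j} = {2, 3} then
        delta1 * (indicator {-11..-9} x + indicator {9..11} x) + delta2 * indicator {-1..1} x
      else 0)"

definition rescale :: "real \<Rightarrow> (real \<Rightarrow> real) \<Rightarrow> real \<Rightarrow> real" where
  "rescale \<epsilon> K x = K (x / \<epsilon>) / \<epsilon>"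

definition conv :: "(real \<Rightarrow> real) \<Rightarrow> (real \<Rightarrow> real) \<Rightarrow> real \<Rightarrow> real" where
  "conv f g x = (LINT y|lborel. f (x - y) * g y)"

definition sigma :: "nat \<Rightarrow> nat \<Rightarrow> real" where
  "sigma i j = (if i = j then 0 else (1/2) * (LINT x|lborel. \<bar>x\<bar> * Kern i j x))"

definition mu :: "nat \<Rightarrow> nat \<Rightarrow> real" where
  "mu i j = 1 / (2 * Kern i j 0)"

definition mu_inv :: "nat \<Rightarrow> nat \<Rightarrow> real" where
  "mu_inv i j = (if i = j then 0 else 1 / mu i j)"

definition cond_neg_semidef :: "(nat \<Rightarrow> nat \<Rightarrow> real) \<Rightarrow> bool" where
  "cond_neg_semidef A \<longleftrightarrow>
     (\<forall>\<xi> :: nat \<Rightarrow> real. (\<Sum>i\<in>phases. \<xi> i) = 0 \<longrightarrow>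
        (\<Sum>i\<in>phases. \<Sum>j\<in>phases. A i j * \<xi> i * \<xi> j) \<le> 0)"

definition u_eps :: "real \<Rightarrow> nat \<Rightarrow> real \<Rightarrow> real" where
  "u_eps \<epsilon> i x =
     (if i = 1 then indicator {\<epsilon>..} x
      else if i = 2 then indicator {..-\<epsilon>} x
      else if i = 3 then indicator {-\<epsilon>..\<epsilon>} x else 0)"

definition u0 :: "nat \<Rightarrow> real \<Rightarrow> real" where
  "u0 i x = (if i = 1 then indicator {0..} x else if i = 2 then indicator {..0} x else 0)"

definition E_nonlocal :: "real \<Rightarrow> (nat \<Rightarrow> real \<Rightarrow> real) \<Rightarrow> real" where
  "E_nonlocal \<epsilon> u =
     (1 / \<epsilon>) * (\<Sum>(i, j)\<in>I3. LINT x|lborel. u j x * conv (rescale \<epsilon> (Kern i j)) (u i) x)"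

definition Sigma_ph :: "(nat \<Rightarrow> real \<Rightarrow> real) \<Rightarrow> nat \<Rightarrow> real set" where
  "Sigma_ph u i = {x. u i x = 1}"

text \<open>H^0 = counting measure; rendered with card (the sets involved are finite).\<close>
definition E_sharp :: "(nat \<Rightarrow> real \<Rightarrow> real) \<Rightarrow> (nat \<Rightarrow> nat \<Rightarrow> real) \<Rightarrow> real" where
  "E_sharp u s =
     (\<Sum>(i, j)\<in>I3. s i j * real (card (frontier (Sigma_ph u i) \<inter> frontier (Sigma_ph u j))))"

end

theory Submission
  imports Defs
begin

text \<open>
  Far out, at distance about \<open>10\<close>, the kernels \<open>K\<^sub>1\<^sub>3 = K\<^sub>2\<^sub>3\<close> carry a small mass \<open>\<delta>\<^sub>1\<close>;
  it dominates their first moment, so \<open>2\<sigma>\<^sub>1\<^sub>3 = 40\<delta>\<^sub>1 + \<delta>\<^sub>2\<close>.  In the configuration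
  \<open>u\<^sub>\<epsilon>\<close> the third phase is a layer of width \<open>2\<epsilon>\<close> between phases 1 and 2.  This
  separates phases 1 and 2 beyond the range \<open>\<epsilon>\<close> of the rescaled \<open>K\<^sub>1\<^sub>2\<close>, so they do
  not interact at all, while the far part of \<open>K\<^sub>1\<^sub>3\<close> only ever sees the thin layer and
  contributes \<open>8\<delta>\<^sub>1\<close> per interface instead of \<open>40\<delta>\<^sub>1\<close>.  Each of the two interfaces
  thus costs \<open>8\<delta>\<^sub>1 + \<delta>\<^sub>2 = 7/16\<close>, whereas the limit \<open>u\<^sub>0\<close> has a single interface
  of cost \<open>2\<sigma>\<^sub>1\<^sub>2 = 1\<close>.

  All integrals reduce to integrals of piecewise affine functions, and the reflection
  \<open>x \<mapsto> -x\<close>, under which every kernel is even, halves the number of cases.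
\<close>

definition near_far_kernel :: "real \<Rightarrow> real \<Rightarrow> real \<Rightarrow> real" where
  "near_far_kernel d1 d2 z =
     d1 * (indicator {-11..-9} z + indicator {9..11} z) + d2 * indicator {-1..1} z"

lemma Kern_eq_near_far_kernel:
  "Kern 1 2 = near_far_kernel 0 1" "Kern 2 1 = near_far_kernel 0 1"
  "Kern 1 3 = near_far_kernel delta1 delta2" "Kern 3 1 = near_far_kernel delta1 delta2"
  "Kern 2 3 = near_far_kernel delta1 delta2" "Kern 3 2 = near_far_kernel delta1 delta2"
  by (auto simp: Kern_def near_far_kernel_def doubleton_eq_iff)

lemma Kern_even: "Kern i j (- z) = Kern i j z"
  by (auto simp: Kern_def split: split_indicator)

lemma rescale_even:
  assumes "\<And>z. K (- z) = K z"
  shows "rescale e K (- z) = rescale e K z"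
  using assms[of "z / e"] by (simp add: rescale_def)

lemma lborel_integral_reflect: "(LINT x|lborel. f (- x)) = (LINT x|lborel. f x)"
  for f :: "real \<Rightarrow> real"
  using lborel_integral_real_affine[of "-1" f 0] by simp

lemma conv_reflect:
  assumes "\<And>z. K (- z) = K z"
  shows "conv K (\<lambda>y. f (- y)) x = conv K f (- x)"
proof -
  have "conv K (\<lambda>y. f (- y)) x = (LINT y|lborel. K (x + y) * f y)"
    unfolding conv_def by (subst lborel_integral_reflect[symmetric]) simp
  also have "\<dots> = conv K f (- x)"
  proof -
    have "K (x + y) = K (- x - y)" for y
      using assms[of "- x - y"] by (simp add: add.commute)
    then show ?thesis unfolding conv_def by (simp only:)
  qed
  finally show ?thesis .
qed

lemma integral_mult_conv_reflect:
  assumes "\<And>z. K (- z) = K z"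
  shows "(LINT x|lborel. g (- x) * conv K (\<lambda>y. f (- y)) x) = (LINT x|lborel. g x * conv K f x)"
  using lborel_integral_reflect[of "\<lambda>x. g x * conv K f x"] by (simp add: assms conv_reflect)

lemma measure_lborel_Icc_max: "measure lborel {a..b} = max 0 (b - a)" for a b :: real
  by (cases "a \<le> b") auto

lemma integrable_indicator_Int_Icc:
  fixes S :: "real set" assumes "S \<in> sets lborel"
  shows "integrable lborel (indicator (S \<inter> {a..b}) :: real \<Rightarrow> real)"
proof -
  have "emeasure lborel (S \<inter> {a..b}) \<le> emeasure lborel {a..b}"
    by (rule emeasure_mono) auto
  also have "\<dots> < \<infinity>"
    by (simp add: emeasure_lborel_Icc_eq)
  finally show ?thesis
    using assms by (simp add: integrable_indicator_iff)
qed

lemma conv_rescale_near_far_kernel_indicator: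
  fixes S :: "real set" assumes S: "S \<in> sets lborel" and e: "e > 0"
  shows "conv (rescale e (near_far_kernel d1 d2)) (indicator S) x =
    (d1 * (measure lborel (S \<inter> {x+9*e..x+11*e}) + measure lborel (S \<inter> {x-11*e..x-9*e}))
     + d2 * measure lborel (S \<inter> {x-e..x+e})) / e"
proof -
  have "rescale e (near_far_kernel d1 d2) (x - y) * indicator S y =
      d1 / e * indicator (S \<inter> {x+9*e..x+11*e}) y + d1 / e * indicator (S \<inter> {x-11*e..x-9*e}) y
    + d2 / e * indicator (S \<inter> {x-e..x+e}) y" for y
    using e by (auto simp: rescale_def near_far_kernel_def field_simps split: split_indicator)
  then show ?thesis
    unfolding conv_def
    by (simp add: integrable_indicator_Int_Icc[OF S] add_divide_distrib ring_distribs del: integral_indicator)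
qed

lemma integral_indicator_Icc_affine:
  fixes a b p q :: real assumes "a \<le> b"
  shows "(LINT x|lborel. indicator {a..b} x * (p * x + q)) = p * (b\<^sup>2 - a\<^sup>2) / 2 + q * (b - a)"
proof -
  have "(LINT x|lborel. indicator {a..b} x *\<^sub>R (p * x + q)) = (p*b\<^sup>2/2 + q*b) - (p*a\<^sup>2/2 + q*a)"
  proof (rule integral_FTC_atLeastAtMost[OF assms])
    fix x
    have "((\<lambda>x. p*x\<^sup>2/2 + q*x) has_real_derivative p * x + q) (at x within {a..b})"
      by (auto intro!: derivative_eq_intros)
    then show "((\<lambda>x. p*x\<^sup>2/2 + q*x) has_vector_derivative p * x + q) (at x within {a..b})"
      by (simp add: has_real_derivative_iff_has_vector_derivative)
  qed (auto intro!: continuous_intros)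
  then show ?thesis by (simp add: field_simps)
qed

lemma integral_indicator_Ioc_affine:
  fixes a b p q :: real assumes "a \<le> b"
  shows "(LINT x|lborel. indicator {a<..b} x * (p * x + q)) = p * (b\<^sup>2 - a\<^sup>2) / 2 + q * (b - a)"
proof -
  have "(LINT x|lborel. indicator {a<..b} x * (p * x + q)) = (LINT x|lborel. indicator {a..b} x * (p * x + q))"
    by (rule integral_cong_AE)
       (auto intro!: eventually_mono[OF AE_lborel_singleton[of a]] split: split_indicator)
  with integral_indicator_Icc_affine[OF assms] show ?thesis by simp
qed

lemma integrable_indicator_Icc_affine:
  "integrable lborel (\<lambda>x. indicator {a..b} x * (p * x + q :: real))"
  using borel_integrable_atLeastAtMost[of a b "\<lambda>x. p * x + q"] by (simp add: mult.commute)

lemma integrable_indicator_Ioc_affine: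
  "integrable lborel (\<lambda>x. indicator {a<..b} x * (p * x + q :: real))"
proof (rule integrable_cong_AE_imp[OF integrable_indicator_Icc_affine])
  show "AE x in lborel. indicator {a..b} x * (p * x + q) = indicator {a<..b} x * (p * x + q)"
    by (auto intro!: eventually_mono[OF AE_lborel_singleton[of a]] split: split_indicator)
qed measurable

lemmas integral_piecewise_affine =
  integral_indicator_Icc_affine integral_indicator_Ioc_affine
  integrable_indicator_Icc_affine integrable_indicator_Ioc_affine
  Bochner_Integration.integral_add Bochner_Integration.integrable_add

lemma integral_abs_mult_near_far_kernel:
  "(LINT x|lborel. \<bar>x\<bar> * near_far_kernel d1 d2 x) = 40 * d1 + d2"
proof -
  have "\<bar>x\<bar> * near_far_kernel d1 d2 x =
      indicator {-11..-9} x * (- d1 * x + 0) + indicator {9..11} x * (d1 * x + 0)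
    + indicator {-1..0} x * (- d2 * x + 0) + indicator {0<..1} x * (d2 * x + 0)" for x :: real
    by (auto simp: near_far_kernel_def split: split_indicator)
  then show ?thesis
    by (simp only: integral_piecewise_affine) (simp add: power2_eq_square)
qed

lemma interaction_halfline_halfline:
  fixes e :: real assumes e: "e > 0"
  shows "(LINT x|lborel. indicator {..-e} x * conv (rescale e (near_far_kernel 0 d2)) (indicator {e..}) x) = 0"
proof -
  have "indicator {..-e} x * conv (rescale e (near_far_kernel 0 d2)) (indicator {e..}) x = 0" for x
    using e by (auto simp: conv_rescale_near_far_kernel_indicator measure_lborel_Icc_max split: split_indicator)
  then show ?thesis by (simp only: integral_zero)
qed

lemma interaction_layer_halfline:
  fixes e :: real assumes e: "e > 0"
  shows "(LINT x|lborel. indicator {-e..e} x * conv (rescale e (near_far_kernel d1 d2)) (indicator {e..}) x)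
    = 4 * d1 * e + d2 * e / 2"
proof -
  have "indicator {-e..e} x * conv (rescale e (near_far_kernel d1 d2)) (indicator {e..}) x =
      indicator {-e..e} x * (0 * x + 2 * d1) + indicator {0..e} x * (d2 / e * x + 0)" for x
    using e by (auto simp: conv_rescale_near_far_kernel_indicator measure_lborel_Icc_max max_def field_simps
        split: split_indicator)
  then show ?thesis
    using e by (simp only: integral_piecewise_affine) (auto simp: field_simps power2_eq_square)
qed

lemma interaction_halfline_layer:
  fixes e :: real assumes e: "e > 0"
  shows "(LINT x|lborel. indicator {e..} x * conv (rescale e (near_far_kernel d1 d2)) (indicator {-e..e}) x)
    = 4 * d1 * e + d2 * e / 2"
proof -
  have "indicator {e..} x * conv (rescale e (near_far_kernel d1 d2)) (indicator {-e..e}) x =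
      indicator {8*e..10*e} x * (d1 / e * x + - 8 * d1) + indicator {10*e<..12*e} x * (- d1 / e * x + 12 * d1)
    + indicator {e..2*e} x * (- d2 / e * x + 2 * d2)" for x
    using e by (auto simp: conv_rescale_near_far_kernel_indicator measure_lborel_Icc_max max_def min_def field_simps
        split: split_indicator)
  then show ?thesis
    using e by (simp only: integral_piecewise_affine) (auto simp: field_simps power2_eq_square)
qed

lemma sum_phases: "(\<Sum>i\<in>phases. f i) = f 1 + f 2 + (f 3 :: real)"
  by (simp add: phases_def)

lemma ball_phases: "(\<forall>i\<in>phases. P i) \<longleftrightarrow> P 1 \<and> P 2 \<and> P 3"
  by (simp add: phases_def)

lemma sum_I3: "(\<Sum>(i, j)\<in>I3. f i j) = f 1 2 + f 1 3 + f 2 1 + f 2 3 + f 3 1 + (f 3 2 :: real)"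
proof -
  have I3_eq: "I3 = {(1,2), (1,3), (2,1), (2,3), (3,1), (3,2)}"
    by (auto simp: I3_def phases_def)
  show ?thesis unfolding I3_eq by simp
qed

lemma sigma_eq:
  "sigma 1 2 = 1/2" "sigma 2 1 = 1/2"
  "sigma 1 3 = 20 * delta1 + delta2 / 2" "sigma 3 1 = 20 * delta1 + delta2 / 2"
  "sigma 2 3 = 20 * delta1 + delta2 / 2" "sigma 3 2 = 20 * delta1 + delta2 / 2"
  "sigma 1 1 = 0" "sigma 2 2 = 0" "sigma 3 3 = 0"
  unfolding sigma_def Kern_eq_near_far_kernel by (simp_all add: integral_abs_mult_near_far_kernel)

lemma mu_eq: "mu 1 2 = 1/2" "mu 1 3 = 1 / (2 * delta2)" "mu 2 3 = 1 / (2 * delta2)"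
  unfolding mu_def Kern_eq_near_far_kernel by (simp_all add: near_far_kernel_def)

lemma mu_inv_eq:
  "mu_inv 1 2 = 2" "mu_inv 2 1 = 2"
  "mu_inv 1 3 = 2 * delta2" "mu_inv 3 1 = 2 * delta2"
  "mu_inv 2 3 = 2 * delta2" "mu_inv 3 2 = 2 * delta2"
  "mu_inv 1 1 = 0" "mu_inv 2 2 = 0" "mu_inv 3 3 = 0"
  unfolding mu_inv_def mu_def Kern_eq_near_far_kernel by (simp_all add: near_far_kernel_def delta2_def)

text \<open>For \<open>\<xi>\<^sub>3 = -\<xi>\<^sub>1 - \<xi>\<^sub>2\<close> the quadratic form equals \<open>2a\<xi>\<^sub>1\<xi>\<^sub>2 - 2b(\<xi>\<^sub>1 + \<xi>\<^sub>2)\<^sup>2\<close>,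
  and \<open>4\<xi>\<^sub>1\<xi>\<^sub>2 \<le> (\<xi>\<^sub>1 + \<xi>\<^sub>2)\<^sup>2\<close>.\<close>
lemma cond_neg_semidef_isosceles:
  fixes A :: "nat \<Rightarrow> nat \<Rightarrow> real"
  assumes "A 1 1 = 0" "A 2 2 = 0" "A 3 3 = 0" "A 1 2 = a" "A 2 1 = a"
    "A 1 3 = b" "A 3 1 = b" "A 2 3 = b" "A 3 2 = b" and "0 \<le> a" "a \<le> 4 * b"
  shows "cond_neg_semidef A"
  unfolding cond_neg_semidef_def
proof (intro allI impI)
  fix \<xi> :: "nat \<Rightarrow> real"
  assume "(\<Sum>i\<in>phases. \<xi> i) = 0"
  then have \<xi>3: "\<xi> 3 = - \<xi> 1 - \<xi> 2" by (simp add: sum_phases)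
  define s where "s = \<xi> 1 + \<xi> 2"
  have form: "(\<Sum>i\<in>phases. \<Sum>j\<in>phases. A i j * \<xi> i * \<xi> j) = 2 * a * \<xi> 1 * \<xi> 2 - 2 * b * s\<^sup>2"
    unfolding sum_phases assms \<xi>3 s_def by (simp add: algebra_simps power2_eq_square)
  have "4 * \<xi> 1 * \<xi> 2 \<le> s\<^sup>2"
    using sum_squares_ge_zero[of "\<xi> 1 - \<xi> 2" 0] by (simp add: s_def power2_eq_square algebra_simps)
  then have "a * (4 * \<xi> 1 * \<xi> 2) \<le> 4 * b * s\<^sup>2"
    using \<open>0 \<le> a\<close> \<open>a \<le> 4 * b\<close> by (meson mult_left_mono mult_right_mono order_trans zero_le_power2)
  then show "(\<Sum>i\<in>phases. \<Sum>j\<in>phases. A i j * \<xi> i * \<xi> j) \<le> 0"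
    unfolding form by linarith
qed

lemma u_eps_eq: "u_eps e 1 = indicator {e..}" "u_eps e 2 = indicator {..-e}" "u_eps e 3 = indicator {-e..e}"
  by (auto simp: u_eps_def)

lemma u_eps_reflect:
  "u_eps e 1 (- x) = u_eps e 2 x" "u_eps e 2 (- x) = u_eps e 1 x" "u_eps e 3 (- x) = u_eps e 3 x"
  by (auto simp: u_eps_def split: split_indicator)

lemma E_nonlocal_u_eps:
  fixes e :: real assumes e: "e > 0"
  shows "E_nonlocal e (u_eps e) = 16 * delta1 + 2 * delta2"
proof -
  let ?I = "\<lambda>i j. LINT x|lborel. u_eps e j x * conv (rescale e (Kern i j)) (u_eps e i) x"
  have reflect: "?I i j = (LINT x|lborel. u_eps e j (- x) * conv (rescale e (Kern i j)) (\<lambda>y. u_eps e i (- y)) x)"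
    for i j
    by (rule sym, rule integral_mult_conv_reflect, rule rescale_even, rule Kern_even)
  have "?I 2 1 = ?I 1 2"
    using reflect[where i=2 and j=1] by (simp only: u_eps_reflect Kern_eq_near_far_kernel)
  moreover have "?I 2 3 = ?I 1 3"
    using reflect[where i=2 and j=3] by (simp only: u_eps_reflect Kern_eq_near_far_kernel)
  moreover have "?I 3 2 = ?I 3 1"
    using reflect[where i=3 and j=2] by (simp only: u_eps_reflect Kern_eq_near_far_kernel)
  moreover have "?I 1 2 = 0"
    unfolding u_eps_eq Kern_eq_near_far_kernel by (rule interaction_halfline_halfline[OF e])
  moreover have "?I 1 3 = 4 * delta1 * e + delta2 * e / 2"
    unfolding u_eps_eq Kern_eq_near_far_kernel by (rule interaction_layer_halfline[OF e])
  moreover have "?I 3 1 = 4 * delta1 * e + delta2 * e / 2"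
    unfolding u_eps_eq Kern_eq_near_far_kernel by (rule interaction_halfline_layer[OF e])
  ultimately show ?thesis
    using e by (simp add: E_nonlocal_def sum_I3 field_simps)
qed

lemma L1_dist_u_eps_u0:
  fixes e :: real assumes e: "e > 0" and i: "i \<in> phases"
  shows "(LINT x|lborel. \<bar>u_eps e i x - u0 i x\<bar>) = (if i = 3 then 2 * e else e)"
proof -
  consider "i = 1" | "i = 2" | "i = 3" using i by (auto simp: phases_def)
  then show ?thesis
  proof cases
    case 1
    then have "(\<lambda>x. \<bar>u_eps e i x - u0 i x\<bar>) = indicator {0..<e}"
      using e by (auto simp: u_eps_def u0_def split: split_indicator)
    with 1 e show ?thesis by simp
  next
    case 2
    then have "(\<lambda>x. \<bar>u_eps e i x - u0 i x\<bar>) = indicator {-e<..0}"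
      using e by (auto simp: u_eps_def u0_def split: split_indicator)
    with 2 e show ?thesis by simp
  next
    case 3
    then have "(\<lambda>x. \<bar>u_eps e i x - u0 i x\<bar>) = indicator {-e..e}"
      using e by (auto simp: u_eps_def u0_def split: split_indicator)
    with 3 e show ?thesis by simp
  qed
qed

lemma u_eps_tendsto_u0_L1:
  assumes "i \<in> phases"
  shows "((\<lambda>\<epsilon>. LINT x|lborel. \<bar>u_eps \<epsilon> i x - u0 i x\<bar>) \<longlongrightarrow> 0) (at_right 0)"
proof -
  let ?c = "if i = 3 then 2 else 1 :: real"
  have "((\<lambda>\<epsilon>. ?c * \<epsilon>) \<longlongrightarrow> 0) (at_right 0)"
    by (auto intro!: tendsto_eq_intros)
  moreover have "\<forall>\<^sub>F \<epsilon> in at_right 0. ?c * \<epsilon> = (LINT x|lborel. \<bar>u_eps \<epsilon> i x - u0 i x\<bar>)"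
    by (rule eventually_mono[OF eventually_at_right_less]) (simp add: L1_dist_u_eps_u0 assms)
  ultimately show ?thesis by (rule Lim_transform_eventually)
qed

lemma E_sharp_u0: "E_sharp u0 sigma = 2 * sigma 1 2"
proof -
  have "Sigma_ph u0 1 = {0..}" "Sigma_ph u0 2 = {..0}" "Sigma_ph u0 3 = {}"
    by (auto simp: Sigma_ph_def u0_def split: split_indicator)
  \<comment> \<open>\<open>One_nat_def\<close> would turn \<open>1\<close> into \<open>Suc 0\<close> before \<open>sigma_eq\<close> can match.\<close>
  then show ?thesis
    by (simp add: E_sharp_def sum_I3 sigma_eq del: One_nat_def)
qed

theorem mainTheorem6:
  shows "sigma 1 2 = 1/2 \<and> sigma 1 3 = 20 * delta1 + delta2 / 2 \<and> sigma 2 3 = 20 * delta1 + delta2 / 2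
    \<and> mu 1 2 = 1/2 \<and> mu 1 3 = 1 / (2 * delta2) \<and> mu 2 3 = 1 / (2 * delta2)
    \<and> (\<forall>i\<in>phases. \<forall>j\<in>phases. \<forall>k\<in>phases. sigma i j + sigma j k \<ge> sigma i k)
    \<and> cond_neg_semidef sigma \<and> cond_neg_semidef mu_inv
    \<and> (\<forall>\<epsilon>>0. E_nonlocal \<epsilon> (u_eps \<epsilon>) = 16 * delta1 + 2 * delta2)
    \<and> 16 * delta1 + 2 * delta2 = 7/8
    \<and> (\<forall>i\<in>phases. ((\<lambda>\<epsilon>. LINT x|lborel. \<bar>u_eps \<epsilon> i x - u0 i x\<bar>) \<longlongrightarrow> 0) (at_right 0))
    \<and> E_sharp u0 sigma = 2 * sigma 1 2 \<and> 2 * sigma 1 2 = 1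
    \<and> Liminf (at_right 0) (\<lambda>\<epsilon>. ereal (E_nonlocal \<epsilon> (u_eps \<epsilon>))) < ereal (E_sharp u0 sigma)
    \<and> mu_inv 1 2 > mu_inv 1 3 + mu_inv 3 2"
proof -
  have \<delta>: "delta1 = 1/64" "delta2 = 5/16" by (simp_all add: delta1_def delta2_def)
  have triangle: "\<forall>i\<in>phases. \<forall>j\<in>phases. \<forall>k\<in>phases. sigma i j + sigma j k \<ge> sigma i k"
    by (simp add: ball_phases sigma_eq \<delta> del: One_nat_def)
  have "cond_neg_semidef sigma"
    by (rule cond_neg_semidef_isosceles[OF sigma_eq(7-9,1-6)]) (simp_all add: \<delta>)
  moreover have "cond_neg_semidef mu_inv"
    by (rule cond_neg_semidef_isosceles[OF mu_inv_eq(7-9,1-6)]) (simp_all add: \<delta>)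
  moreover have "Liminf (at_right 0) (\<lambda>\<epsilon>. ereal (E_nonlocal \<epsilon> (u_eps \<epsilon>))) = ereal (7/8)"
  proof -
    have "\<forall>\<^sub>F \<epsilon> in at_right 0. ereal (E_nonlocal \<epsilon> (u_eps \<epsilon>)) = ereal (7/8)"
      by (rule eventually_mono[OF eventually_at_right_less]) (simp add: E_nonlocal_u_eps \<delta>)
    then show ?thesis
      by (simp only: Liminf_eq) (simp add: Liminf_const)
  qed
  ultimately show ?thesis
    using triangle E_nonlocal_u_eps u_eps_tendsto_u0_L1
    by (simp add: sigma_eq mu_eq mu_inv_eq E_sharp_u0 \<delta> del: One_nat_def)
qed

end
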